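(* For $(\alpha,\beta)\in\mathbb{R}^2$, let $\mathfrak{m}_{\alpha,\beta}$ be the $8$-dimensional real Lie algebra with a basis $\{v^1,\dots,v^8\}$ of its dual satisfying $$dv^1=dv^2=dv^3=0,\quad dv^4=v^{13},\quad dv^5=v^{23},\quad dv^6=v^{14}+v^{25}-v^{35},$$ $$dv^7=\alpha v^{12}+v^{15}+v^{24}+v^{34},\quad dv^8=v^{16}-2\beta v^{25}+v^{27}-\beta v^{35}-v^{45},$$ and let $\{v'^1,\dots,v'^8\}$ be the analogous basis of $\mathfrak{m}_{\alpha',\beta'}^*$. Suppose $f:\mathfrak{m}_{\alpha,\beta}\to\mathfrak{m}_{\alpha',\beta'}$ is a Lie algebra isomorphism and let $F:\bigwedge^*\mathfrak{m}_{\alpha',\beta'}^*\to\bigwedge^*\mathfrak{m}_{\alpha,\beta}^*$ be the extension of its dual, written $F(v'^i)=\sum_{j=1}^8\lambda^i_j v^j$. Then $$\alpha'=\pm\lambda^1_1\,\alpha,\qquad \beta'=\lambda^1_1\,\beta.$$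
   Context: $v^{ij}=v^i\wedge v^j$ and $d$ is the Chevalley–Eilenberg differential; $F$ commutes with $d$. *)

theory Defs
  imports "HOL-Analysis.Analysis"
begin

text \<open>The Lie algebra m_{alpha,beta} is modelled on real^8 with standard basis e_1..e_8
  (axis i 1), dual to v^1..v^8 (coordinate functionals x $ i).  Note: in the numeral
  type 8 the index 8 is the residue 0, distinct from 1..7.\<close>

definition wedge2 :: "8 \<Rightarrow> 8 \<Rightarrow> real^8 \<Rightarrow> real^8 \<Rightarrow> real" where
  "wedge2 i j x y = x $ i * y $ j - x $ j * y $ i"

definition dv :: "real \<Rightarrow> real \<Rightarrow> 8 \<Rightarrow> real^8 \<Rightarrow> real^8 \<Rightarrow> real" where
  "dv \<alpha> \<beta> k x y =
    (if k = 4 then wedge2 1 3 x y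
     else if k = 5 then wedge2 2 3 x y
     else if k = 6 then wedge2 1 4 x y + wedge2 2 5 x y - wedge2 3 5 x y
     else if k = 7 then \<alpha> * wedge2 1 2 x y + wedge2 1 5 x y + wedge2 2 4 x y + wedge2 3 4 x y
     else if k = 8 then wedge2 1 6 x y - 2 * \<beta> * wedge2 2 5 x y + wedge2 2 7 x y
                        - \<beta> * wedge2 3 5 x y - wedge2 4 5 x y
     else 0)"

text \<open>Lie bracket determined by the Chevalley--Eilenberg convention d theta (x,y) = - theta([x,y]).\<close>
definition mbr :: "real \<Rightarrow> real \<Rightarrow> real^8 \<Rightarrow> real^8 \<Rightarrow> real^8" where
  "mbr \<alpha> \<beta> x y = (\<chi> k. - dv \<alpha> \<beta> k x y)"

definition lie_iso :: "real \<Rightarrow> real \<Rightarrow> real \<Rightarrow> real \<Rightarrow> (real^8 \<Rightarrow> real^8) \<Rightarrow> bool" where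
  "lie_iso \<alpha> \<beta> \<alpha>' \<beta>' f \<longleftrightarrow> linear f \<and> bij f \<and>
     (\<forall>x y. f (mbr \<alpha> \<beta> x y) = mbr \<alpha>' \<beta>' (f x) (f y))"

text \<open>lambda^i_j with F(v'^i) = sum_j lambda^i_j v^j, F the dual of f: lambda^i_j = v'^i(f e_j).\<close>
definition lam :: "(real^8 \<Rightarrow> real^8) \<Rightarrow> 8 \<Rightarrow> 8 \<Rightarrow> real" where
  "lam f i j = f (axis j 1) $ i"

end

theory Submission
  imports Defs
begin

(* Write F for the pullback along f, so that F(v'^i) = sum_j lam^i_j v^j and F d = d F.
   Closed 1-forms of m_{alpha,beta} are spanned by v^1, v^2, v^3, so F maps span(v'^1, v'^2, v'^3)
   into span(v^1, v^2, v^3); as F is invertible, the top-left 3x3 block of lam is invertible.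
   Comparing coefficients in F(dv'^k) = d F(v'^k) for k = 4, ..., 7 forces that block to be
   diag(a, r, r) with r = +-a, where a = lam^1_1.  The alpha-term of dv'^7 and the beta-terms of
   dv'^8 then give alpha' = r alpha and beta' = a beta. *)

lemma UNIV_8: "(UNIV::8 set) = {1,2,3,4,5,6,7,8}"
proof -
  have "card {1,2,3,4,5,6,7,8::8} = 8" by simp
  then have "{1,2,3,4,5,6,7,8::8} = UNIV"
    by (intro card_subset_eq) simp_all
  then show ?thesis by simp
qed

lemma sum_UNIV_8: "(\<Sum>m\<in>UNIV. g (m::8)) = g 1 + g 2 + g 3 + g 4 + g 5 + g 6 + g 7 + (g 8 :: real)"
  unfolding UNIV_8 by (simp add: add.assoc)

lemma axis_one_nth: "axis i (1::real) $ j = (if j = i then 1 else 0)"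
  by (simp add: axis_def)

lemma linear_component_lam:
  assumes "linear f"
  shows "f x $ k = (\<Sum>j\<in>UNIV. lam f k j * x $ j)"
  using linear_componentwise[of f x k] assms
  unfolding linear_matrix_vector_mul_eq lam_def by (simp add: mult.commute)

definition det3 :: "real \<Rightarrow> real \<Rightarrow> real \<Rightarrow> real \<Rightarrow> real \<Rightarrow> real \<Rightarrow> real \<Rightarrow> real \<Rightarrow> real \<Rightarrow> real" where
  "det3 a11 a12 a13 a21 a22 a23 a31 a32 a33 =
     a11 * (a22 * a33 - a23 * a32) - a12 * (a21 * a33 - a23 * a31) + a13 * (a21 * a32 - a22 * a31)"

lemma det3_mult:
  "det3 a11 a12 a13 a21 a22 a23 a31 a32 a33 * det3 x11 x12 x13 x21 x22 x23 x31 x32 x33 =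
   det3 (a11*x11 + a12*x21 + a13*x31) (a11*x12 + a12*x22 + a13*x32) (a11*x13 + a12*x23 + a13*x33)
        (a21*x11 + a22*x21 + a23*x31) (a21*x12 + a22*x22 + a23*x32) (a21*x13 + a22*x23 + a23*x33)
        (a31*x11 + a32*x21 + a33*x31) (a31*x12 + a32*x22 + a33*x32) (a31*x13 + a32*x23 + a33*x33)"
  unfolding det3_def by algebra

lemma det3_lam_top_block_nonzero:
  fixes f :: "real^8 \<Rightarrow> real^8"
  assumes "linear f" and "surj f"
    and top: "\<And>k m. k \<in> {1,2,3} \<Longrightarrow> m \<in> {4,5,6,7,8} \<Longrightarrow> lam f k m = 0"
  shows "det3 (lam f 1 1) (lam f 1 2) (lam f 1 3) (lam f 2 1) (lam f 2 2) (lam f 2 3)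
              (lam f 3 1) (lam f 3 2) (lam f 3 3) \<noteq> 0"
proof -
  obtain x1 x2 x3 where x: "f x1 = axis 1 1" "f x2 = axis 2 1" "f x3 = axis 3 1"
    using \<open>surj f\<close> by (metis surjD)
  have block: "lam f k 1 * x $ 1 + lam f k 2 * x $ 2 + lam f k 3 * x $ 3 = (if k = i then 1 else 0)"
    if "f x = axis i 1" "k \<in> {1,2,3}" for x i k
    using linear_component_lam[OF \<open>linear f\<close>, of x k] that top[OF that(2)]
    by (simp add: sum_UNIV_8 axis_one_nth)
  have "det3 (lam f 1 1) (lam f 1 2) (lam f 1 3) (lam f 2 1) (lam f 2 2) (lam f 2 3)
             (lam f 3 1) (lam f 3 2) (lam f 3 3) *
        det3 (x1$1) (x2$1) (x3$1) (x1$2) (x2$2) (x3$2) (x1$3) (x2$3) (x3$3) = det3 1 0 0 0 1 0 0 0 1"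
    unfolding det3_mult by (simp add: block[OF x(1)] block[OF x(2)] block[OF x(3)])
  then show ?thesis by (auto simp: det3_def)
qed

lemma equal_square_sums_cases:
  fixes a b c d :: real
  assumes "a\<^sup>2 + c\<^sup>2 = b\<^sup>2 + d\<^sup>2" and "a * c = b * d" and "a * d - b * c \<noteq> 0"
  shows "(b = c \<and> d = a) \<or> (b = - c \<and> d = - a)"
proof -
  have "(a + c)\<^sup>2 = (b + d)\<^sup>2" and "(a - c)\<^sup>2 = (b - d)\<^sup>2"
    using assms(1,2) by algebra+
  then have "a + c = b + d \<or> a + c = - (b + d)" and "a - c = b - d \<or> a - c = - (b - d)"
    by (simp_all add: power2_eq_iff)
  then show ?thesis
  proof (elim disjE)
    assume "a + c = b + d" "a - c = b - d"
    then have "b = a" "d = c" by linarith+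
    with assms(3) show ?thesis by (simp add: mult.commute)
  next
    assume "a + c = - (b + d)" "a - c = - (b - d)"
    then have "b = - a" "d = - c" by linarith+
    with assms(3) show ?thesis by (simp add: mult.commute)
  qed linarith+
qed

lemma top_block_solution:
  fixes a b c d p q r :: real
  assumes norms: "a\<^sup>2 + c\<^sup>2 = b\<^sup>2 + d\<^sup>2" and prod: "a * c = b * d" and minor: "a * d - b * c \<noteq> 0"
    and e67: "a * b + c * d = p * a + q * c - r * c"
    and e66: "p * b + q * d - r * d = - (b\<^sup>2 + d\<^sup>2)"
    and e77: "a * d + b * c = p * c + q * a + r * a"
    and e76: "p * d + q * b + r * b = - 2 * b * d"
  shows "b = 0 \<and> c = 0 \<and> p = 0 \<and> q = 0 \<and> d = r \<and> r\<^sup>2 = a\<^sup>2 \<and> a \<noteq> 0"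
proof -
  obtain e where e: "e\<^sup>2 = 1" "b = e * c" "d = e * a"
  proof -
    from equal_square_sums_cases[OF norms prod minor] show thesis
    proof
      assume "b = c \<and> d = a"
      then show thesis by (intro that[of 1]) simp_all
    next
      assume "b = - c \<and> d = - a"
      then show thesis by (intro that[of "- 1"]) simp_all
    qed
  qed
  have pq1: "p * a + q * c = 0" and c_factor: "c * (r + 2 * e * a) = 0"
    using e67 e76 e by algebra+
  have pq2: "p * c + q * a = 0" and ra: "r * a = e * (a\<^sup>2 + c\<^sup>2)"
    using e66 e77 e by algebra+
  have c: "c = 0"
  proof (rule ccontr)
    assume "c \<noteq> 0"
    with c_factor have "r = - 2 * e * a" by simp
    with ra e(1) have "3 * a\<^sup>2 + c\<^sup>2 = 0" by algebra
    with \<open>c \<noteq> 0\<close> show False by (simp add: add_nonneg_eq_0_iff)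
  qed
  have a: "a \<noteq> 0" using minor e c by auto
  have r: "r = e * a" using ra c a by (simp add: power2_eq_square)
  show ?thesis using e c a r pq1 pq2 by (simp add: power_mult_distrib)
qed

locale m_isomorphism =
  fixes \<alpha> \<beta> \<alpha>' \<beta>' :: real and f :: "real^8 \<Rightarrow> real^8"
  assumes iso: "lie_iso \<alpha> \<beta> \<alpha>' \<beta>' f"
begin

lemma linear: "linear f" and surj: "surj f"
  using iso by (auto simp: lie_iso_def bij_def)

lemma dv_pullback:
  "dv \<alpha>' \<beta>' k (f x) (f y) = (\<Sum>m\<in>UNIV. lam f k m * dv \<alpha> \<beta> m x y)"
proof -
  have "f (mbr \<alpha> \<beta> x y) = mbr \<alpha>' \<beta>' (f x) (f y)"
    using iso by (simp add: lie_iso_def)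
  then show ?thesis
    using linear_component_lam[OF linear, of "mbr \<alpha> \<beta> x y" k]
    by (simp add: mbr_def sum_negf)
qed

lemma image_axis_nth: "f (axis j 1) $ i = lam f i j"
  by (simp add: lam_def)

lemmas pullback_axes = dv_pullback[of _ "axis i 1" "axis j 1" for i j, unfolded sum_UNIV_8]

lemmas axes_simps = dv_def wedge2_def axis_one_nth image_axis_nth

lemma closed_form_coeffs_vanish:
  assumes "\<And>x y. dv \<alpha>' \<beta>' k x y = 0" and "m \<in> {4,5,6,7,8}"
  shows "lam f k m = 0"
  using assms(2) pullback_axes[of k 1 3] pullback_axes[of k 2 3] pullback_axes[of k 1 4]
    pullback_axes[of k 1 5] pullback_axes[of k 1 6]
  unfolding assms(1) by (auto simp: axes_simps)

lemma top_rows_vanish [simp]: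
  assumes "k \<in> {1,2,3}" and "m \<in> {4,5,6,7,8}"
  shows "lam f k m = 0"
  using assms by (intro closed_form_coeffs_vanish) (auto simp: dv_def)

lemma rows_4_5_vanish [simp]:
  assumes "k \<in> {4,5}" and "m \<in> {6,7,8}"
  shows "lam f k m = 0"
  using assms pullback_axes[of k 1 4] pullback_axes[of k 1 5] pullback_axes[of k 1 6]
  by (auto simp: axes_simps)

lemma third_row [simp]: "lam f 3 1 = 0" "lam f 3 2 = 0"
  and lam33_nonzero: "lam f 3 3 \<noteq> 0"
  and minor_nonzero: "lam f 1 1 * lam f 2 2 - lam f 1 2 * lam f 2 1 \<noteq> 0"
proof -
  have det: "det3 (lam f 1 1) (lam f 1 2) (lam f 1 3) (lam f 2 1) (lam f 2 2) (lam f 2 3)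
                  (lam f 3 1) (lam f 3 2) (lam f 3 3) \<noteq> 0"
    using det3_lam_top_block_nonzero[OF linear surj top_rows_vanish] .
  have "lam f 1 1 * lam f 3 2 - lam f 3 1 * lam f 1 2 = 0"
    and "lam f 2 1 * lam f 3 2 - lam f 3 1 * lam f 2 2 = 0"
    using pullback_axes[of 4 1 2] pullback_axes[of 5 1 2] by (simp_all add: axes_simps)
  then have "det3 (lam f 1 1) (lam f 1 2) (lam f 1 3) (lam f 2 1) (lam f 2 2) (lam f 2 3)
                  (lam f 3 1) (lam f 3 2) (lam f 3 3)
             = lam f 3 3 * (lam f 1 1 * lam f 2 2 - lam f 1 2 * lam f 2 1)"
    and "(lam f 1 1 * lam f 2 2 - lam f 1 2 * lam f 2 1) * lam f 3 1 = 0"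
    and "(lam f 1 1 * lam f 2 2 - lam f 1 2 * lam f 2 1) * lam f 3 2 = 0"
    unfolding det3_def by algebra+
  with det show "lam f 3 1 = 0" "lam f 3 2 = 0" "lam f 3 3 \<noteq> 0"
    "lam f 1 1 * lam f 2 2 - lam f 1 2 * lam f 2 1 \<noteq> 0"
    by auto
qed

lemma rows_4_5_block [simp]:
  "lam f 4 4 = lam f 1 1 * lam f 3 3" "lam f 4 5 = lam f 1 2 * lam f 3 3"
  "lam f 5 4 = lam f 2 1 * lam f 3 3" "lam f 5 5 = lam f 2 2 * lam f 3 3"
  using pullback_axes[of 4 1 3] pullback_axes[of 4 2 3] pullback_axes[of 5 1 3]
    pullback_axes[of 5 2 3]
  by (simp_all add: axes_simps)

lemma rows_6_7_col_8 [simp]: "lam f 6 8 = 0" "lam f 7 8 = 0"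
  using pullback_axes[of 6 1 6] pullback_axes[of 7 1 6] by (simp_all add: axes_simps)

lemma rows_6_7_entries:
  "lam f 3 3 * ((lam f 1 1)\<^sup>2 + (lam f 2 1)\<^sup>2) = lam f 6 6"
  "lam f 3 3 * ((lam f 1 2)\<^sup>2 + (lam f 2 2)\<^sup>2) = lam f 6 6"
  "lam f 3 3 * (lam f 1 1 * lam f 1 2 + lam f 2 1 * lam f 2 2) = lam f 6 7"
  "lam f 3 3 * (lam f 1 3 * lam f 1 1 + lam f 2 3 * lam f 2 1 - lam f 3 3 * lam f 2 1) = lam f 6 7"
  "lam f 3 3 * (lam f 1 3 * lam f 1 2 + lam f 2 3 * lam f 2 2 - lam f 3 3 * lam f 2 2) = - lam f 6 6"
  "lam f 3 3 * (2 * lam f 1 1 * lam f 2 1) = lam f 7 6"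
  "lam f 3 3 * (2 * lam f 1 2 * lam f 2 2) = lam f 7 6"
  "lam f 3 3 * (lam f 1 1 * lam f 2 2 + lam f 1 2 * lam f 2 1) = lam f 7 7"
  "lam f 3 3 * (lam f 1 3 * lam f 2 1 + lam f 2 3 * lam f 1 1 + lam f 3 3 * lam f 1 1) = lam f 7 7"
  "lam f 3 3 * (lam f 1 3 * lam f 2 2 + lam f 2 3 * lam f 1 2 + lam f 3 3 * lam f 1 2) = - lam f 7 6"
  subgoal using pullback_axes[of 6 1 4]
    by (simp add: axes_simps) (simp add: algebra_simps power2_eq_square)
  subgoal using pullback_axes[of 6 2 5]
    by (simp add: axes_simps) (simp add: algebra_simps power2_eq_square)
  subgoal using pullback_axes[of 6 1 5]
    by (simp add: axes_simps) (simp add: algebra_simps power2_eq_square)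
  subgoal using pullback_axes[of 6 3 4]
    by (simp add: axes_simps) (simp add: algebra_simps power2_eq_square)
  subgoal using pullback_axes[of 6 3 5]
    by (simp add: axes_simps) (simp add: algebra_simps power2_eq_square)
  subgoal using pullback_axes[of 7 1 4]
    by (simp add: axes_simps) (simp add: algebra_simps power2_eq_square)
  subgoal using pullback_axes[of 7 2 5]
    by (simp add: axes_simps) (simp add: algebra_simps power2_eq_square)
  subgoal using pullback_axes[of 7 1 5]
    by (simp add: axes_simps) (simp add: algebra_simps power2_eq_square)
  subgoal using pullback_axes[of 7 3 4]
    by (simp add: axes_simps) (simp add: algebra_simps power2_eq_square)
  subgoal using pullback_axes[of 7 3 5]
    by (simp add: axes_simps) (simp add: algebra_simps power2_eq_square)
  done

lemma lam33_cancel: "lam f 3 3 * x = lam f 3 3 * y \<Longrightarrow> x = y"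
  using lam33_nonzero by simp

lemma top_block_relations:
  "(lam f 1 1)\<^sup>2 + (lam f 2 1)\<^sup>2 = (lam f 1 2)\<^sup>2 + (lam f 2 2)\<^sup>2"
  "lam f 1 1 * lam f 2 1 = lam f 1 2 * lam f 2 2"
  "lam f 1 1 * lam f 1 2 + lam f 2 1 * lam f 2 2
     = lam f 1 3 * lam f 1 1 + lam f 2 3 * lam f 2 1 - lam f 3 3 * lam f 2 1"
  "lam f 1 3 * lam f 1 2 + lam f 2 3 * lam f 2 2 - lam f 3 3 * lam f 2 2
     = - ((lam f 1 2)\<^sup>2 + (lam f 2 2)\<^sup>2)"
  "lam f 1 1 * lam f 2 2 + lam f 1 2 * lam f 2 1
     = lam f 1 3 * lam f 2 1 + lam f 2 3 * lam f 1 1 + lam f 3 3 * lam f 1 1"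
  "lam f 1 3 * lam f 2 2 + lam f 2 3 * lam f 1 2 + lam f 3 3 * lam f 1 2
     = - 2 * lam f 1 2 * lam f 2 2"
  subgoal by (rule lam33_cancel) (use rows_6_7_entries(1,2) in linarith)
  subgoal by (rule lam33_cancel) (use rows_6_7_entries(6,7) in linarith)
  subgoal by (rule lam33_cancel) (use rows_6_7_entries(3,4) in linarith)
  subgoal by (rule lam33_cancel) (use rows_6_7_entries(5,2) in linarith)
  subgoal by (rule lam33_cancel) (use rows_6_7_entries(8,9) in linarith)
  subgoal by (rule lam33_cancel) (use rows_6_7_entries(10,7) in linarith)
  done

lemma top_block:
  "lam f 1 2 = 0" "lam f 2 1 = 0" "lam f 1 3 = 0" "lam f 2 3 = 0"
  "lam f 2 2 = lam f 3 3" "(lam f 3 3)\<^sup>2 = (lam f 1 1)\<^sup>2" "lam f 1 1 \<noteq> 0"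
  using top_block_solution[OF top_block_relations(1,2) minor_nonzero top_block_relations(3-6)]
  by simp_all

lemmas top_block_simps [simp] = top_block(1-5)

(* The structure equations below are stated as differences equal to 0, the form in which the
   algebra method reliably uses them as hypotheses. *)
lemma alpha_relation: "\<alpha>' = lam f 3 3 * \<alpha>"
proof -
  have lam52: "lam f 1 1 * lam f 5 2 - lam f 3 3 * lam f 4 1 = 0"
  proof -
    have "lam f 1 1 * lam f 3 3 * lam f 5 3 - lam f 8 7 = 0"
      using pullback_axes[of 8 3 4]
      by (simp add: axes_simps) (simp add: algebra_simps power2_eq_square power3_eq_cube)
    moreover have "lam f 1 1 * lam f 6 5 - (lam f 3 3)\<^sup>2 * lam f 4 1 - lam f 8 7 = 0"
      using pullback_axes[of 8 1 5]
      by (simp add: axes_simps) (simp add: algebra_simps power2_eq_square power3_eq_cube)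
    moreover have "lam f 3 3 * (lam f 5 2 + lam f 5 3) - lam f 6 5 = 0"
      using pullback_axes[of 6 2 3]
      by (simp add: axes_simps) (simp add: algebra_simps power2_eq_square power3_eq_cube)
    ultimately have "lam f 3 3 * (lam f 1 1 * lam f 5 2 - lam f 3 3 * lam f 4 1) = 0"
      by algebra
    with lam33_nonzero show ?thesis by simp
  qed
  have "\<alpha>' * lam f 1 1 * lam f 3 3 + lam f 1 1 * lam f 5 2 - lam f 3 3 * lam f 4 1
          - lam f 7 7 * \<alpha> = 0"
    using pullback_axes[of 7 1 2]
    by (simp add: axes_simps) (simp add: algebra_simps power2_eq_square power3_eq_cube)
  moreover have "lam f 1 1 * (lam f 3 3)\<^sup>2 - lam f 7 7 = 0"
    using pullback_axes[of 7 1 5]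
    by (simp add: axes_simps) (simp add: algebra_simps power2_eq_square power3_eq_cube)
  ultimately have "lam f 1 1 * lam f 3 3 * (\<alpha>' - lam f 3 3 * \<alpha>) = 0"
    using lam52 by algebra
  then show ?thesis
    using top_block(7) lam33_nonzero by simp
qed

lemma beta_relation: "\<beta>' = lam f 1 1 * \<beta>"
proof -
  have sq: "(lam f 3 3)\<^sup>2 - (lam f 1 1)\<^sup>2 = 0"
    using top_block(6) by simp
  have lam42: "lam f 1 1 * lam f 4 2 - lam f 3 3 * lam f 5 1 = 0"
    using pullback_axes[of 6 1 2] pullback_axes[of 6 1 5] by (simp add: axes_simps)
  have lam86: "lam f 8 6 - (lam f 1 1)\<^sup>2 * lam f 4 3 - 2 * lam f 1 1 * lam f 3 3 * lam f 5 1 = 0"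
  proof -
    have "lam f 1 1 * lam f 6 4 + lam f 1 1 * lam f 3 3 * lam f 5 1 - lam f 8 6 = 0"
      using pullback_axes[of 8 1 4]
      by (simp add: axes_simps) (simp add: algebra_simps power2_eq_square power3_eq_cube)
    moreover have "lam f 1 1 * lam f 4 3 + lam f 3 3 * lam f 5 1 - lam f 6 4 = 0"
      using pullback_axes[of 6 1 3]
      by (simp add: axes_simps) (simp add: algebra_simps power2_eq_square power3_eq_cube)
    ultimately show ?thesis by algebra
  qed
  have lam88: "lam f 8 8 - lam f 1 1 * (lam f 3 3)^3 = 0"
    using pullback_axes[of 8 4 5]
    by (simp add: axes_simps) (simp add: algebra_simps power2_eq_square power3_eq_cube)
  have "\<beta>' * (lam f 3 3)^3 + (lam f 3 3)\<^sup>2 * lam f 4 3 - lam f 8 6 - lam f 8 8 * \<beta> = 0"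
    using pullback_axes[of 8 3 5]
    by (simp add: axes_simps) (simp add: algebra_simps power2_eq_square power3_eq_cube)
  then have A: "\<beta>' * (lam f 3 3)^3 - 2 * lam f 1 1 * lam f 3 3 * lam f 5 1
                 - lam f 1 1 * (lam f 3 3)^3 * \<beta> = 0"
    using lam86 lam88 sq by algebra
  have "lam f 3 3 * lam f 7 5 - 2 * \<beta>' * (lam f 3 3)^3 - (lam f 3 3)\<^sup>2 * lam f 4 2
          - lam f 8 6 + 2 * lam f 8 8 * \<beta> = 0"
    using pullback_axes[of 8 2 5]
    by (simp add: axes_simps) (simp add: algebra_simps power2_eq_square power3_eq_cube)
  moreover have "lam f 3 3 * (lam f 4 3 - lam f 4 2) - lam f 7 5 = 0"
    using pullback_axes[of 7 2 3]
    by (simp add: axes_simps) (simp add: algebra_simps power2_eq_square power3_eq_cube)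
  ultimately have B: "\<beta>' * (lam f 3 3)^3 - lam f 1 1 * (lam f 3 3)^3 * \<beta>
                        + (lam f 3 3)\<^sup>2 * lam f 4 2 + lam f 1 1 * lam f 3 3 * lam f 5 1 = 0"
    using lam86 lam88 sq by algebra
  have "lam f 1 1 * (lam f 3 3)^3 * (\<beta>' - lam f 1 1 * \<beta>) = 0"
    using A B lam42 sq by algebra
  then show ?thesis
    using top_block(7) lam33_nonzero by simp
qed

end

theorem lemma3p6:
  fixes \<alpha> \<beta> \<alpha>' \<beta>' :: real and f :: "real^8 \<Rightarrow> real^8"
  assumes "lie_iso \<alpha> \<beta> \<alpha>' \<beta>' f"
  shows "(\<alpha>' = lam f 1 1 * \<alpha> \<or> \<alpha>' = - (lam f 1 1 * \<alpha>)) \<and> \<beta>' = lam f 1 1 * \<beta>"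
proof -
  interpret m_isomorphism \<alpha> \<beta> \<alpha>' \<beta>' f
    using assms by unfold_locales
  have "lam f 3 3 = lam f 1 1 \<or> lam f 3 3 = - lam f 1 1"
    using top_block(6) by (simp add: power2_eq_iff)
  then show ?thesis
    using alpha_relation beta_relation by auto
qed

end
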